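(* Let $K \geq 2$ be an integer and let $\Delta_K = \{\mathbf{p} = (\hat{p}_1,\dots,\hat{p}_K) \in [0,1]^K : \sum_{k=1}^K \hat{p}_k = 1\}$ be the probability simplex. Fix $\mathbf{y} = (\hat{y}_1,\dots,\hat{y}_K) \in \Delta_K$. Let $j \in \{1,\dots,K\}$ be an index with $\hat{y}_j = \max_{1 \leq k \leq K} \hat{y}_k$, and let $\mathbf{t} = (\hat{t}_1,\dots,\hat{t}_K) \in \{0,1\}^K$ be the simplex vertex with $\hat{t}_j = 1$ and $\hat{t}_k = 0$ for $k \neq j$. Then $$\sum_{k=1}^K \log\left(\hat{t}_k + \hat{y}_k\right) \;\leq\; \sum_{k=1}^K \log\left(\hat{p}_k + \hat{y}_k\right) \qquad \text{for all } \mathbf{p} = (\hat{p}_1,\dots,\hat{p}_K) \in \Delta_K,$$ i.e. the function $\mathbf{p} \mapsto \sum_{k=1}^K \log(\hat{p}_k + \hat{y}_k)$ attains its minimum over $\Delta_K$ at $\mathbf{t}$.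
   Context: Here $\log$ is the natural logarithm, with the convention $\log 0 = -\infty$ (values in the extended reals). In the paper's setting, $\hat{y}_k$ is the ground-truth proportion of pixels in segmentation region $k$ and $\hat{p}_k$ is the predicted (soft) proportion of class $k$; the quantity $\sum_k \log(\hat{p}_k + \hat{y}_k)$ is the label-marginal term arising in the decomposition of the multi-class logarithmic Dice loss. *)

theory Defs
  imports "HOL-Analysis.Analysis"
begin

text \<open>Natural logarithm into the extended reals, with log 0 = -infinity.
  (Arguments are never negative in the statement.)\<close>
definition elog :: "real \<Rightarrow> ereal" where
  "elog x = (if x > 0 then ereal (ln x) else -\<infinity>)"

definition prob_simplex :: "nat \<Rightarrow> (nat \<Rightarrow> real) set" where
  "prob_simplex K = {p. (\<forall>k\<in>{1..K}. 0 \<le> p k \<and> p k \<le> 1) \<and> (\<Sum>k=1..K. p k) = 1}"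

end

theory Submission
  imports Defs
begin

text \<open>
  Write \<open>D(y) = ln (1 + y) - ln y\<close>. By concavity of \<open>ln\<close>, for \<open>0 \<le> a \<le> 1\<close> the value
  \<open>ln (a + y)\<close> lies above the chord \<open>ln y + a D(y)\<close>, with equality at \<open>a = 0\<close> and \<open>a = 1\<close>.
  Summing over \<open>k\<close> gives \<open>\<Sum> ln (p\<^sub>k + y\<^sub>k) \<ge> \<Sum> ln y\<^sub>k + \<Sum> p\<^sub>k D(y\<^sub>k)\<close>, and since \<open>D\<close>
  is decreasing, the convex combination \<open>\<Sum> p\<^sub>k D(y\<^sub>k)\<close> is at least \<open>D(y\<^sub>j)\<close> for the
  largest \<open>y\<^sub>j\<close>; the vertex \<open>t\<close> attains exactly \<open>\<Sum> ln y\<^sub>k + D(y\<^sub>j)\<close>. If some \<open>y\<^sub>k\<close>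
  vanishes, it is not the maximal one, so the left-hand side is \<open>-\<infinity>\<close>.
\<close>

lemma ln_add_ge_chord:
  fixes a y :: real
  assumes "0 \<le> a" "a \<le> 1" "0 < y"
  shows "ln y + a * (ln (1 + y) - ln y) \<le> ln (a + y)"
proof -
  have "(1 - a) * ln y + a * ln (1 + y) \<le> ln ((1 - a) * y + a * (1 + y))"
    using ln_concave assms unfolding concave_on_iff
    by (metis add.commute diff_add_cancel diff_ge_0_iff_ge greaterThan_iff
        less_add_same_cancel2 less_trans real_scaleR_def zero_less_one)
  moreover have "(1 - a) * y + a * (1 + y) = a + y"
    by (simp add: algebra_simps)
  ultimately show ?thesis
    by (simp add: algebra_simps)
qed

lemma ln_one_add_diff_ln_antimono:
  fixes u v :: real
  assumes "0 < u" "u \<le> v"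
  shows "ln (1 + v) - ln v \<le> ln (1 + u) - ln u"
proof -
  have "ln (1 + v) - ln v = ln ((1 + v) / v)"
    using assms by (simp add: ln_div)
  also have "\<dots> \<le> ln ((1 + u) / u)"
    using assms by (subst ln_le_cancel_iff) (auto simp: field_simps)
  also have "\<dots> = ln (1 + u) - ln u"
    using assms by (simp add: ln_div)
  finally show ?thesis .
qed

lemma sum_ln_vertex_le:
  fixes A :: "'a set" and p y :: "'a \<Rightarrow> real"
  assumes "finite A" "j \<in> A"
    and y_pos: "\<And>k. k \<in> A \<Longrightarrow> 0 < y k"
    and y_max: "\<And>k. k \<in> A \<Longrightarrow> y k \<le> y j"
    and p_bounds: "\<And>k. k \<in> A \<Longrightarrow> 0 \<le> p k \<and> p k \<le> 1"
    and p_sum: "(\<Sum>k\<in>A. p k) = 1"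
  shows "(\<Sum>k\<in>A. ln ((if k = j then 1 else 0) + y k)) \<le> (\<Sum>k\<in>A. ln (p k + y k))"
proof -
  define D where "D k = ln (1 + y k) - ln (y k)" for k
  have "(\<Sum>k\<in>A. ln ((if k = j then 1 else 0) + y k))
      = (\<Sum>k\<in>A. ln (y k) + (if k = j then D j else 0))"
    by (intro sum.cong) (auto simp: D_def)
  also have "\<dots> = (\<Sum>k\<in>A. ln (y k)) + (\<Sum>k\<in>A. p k * D j)"
    using assms(1,2) p_sum by (simp add: sum.distrib flip: sum_distrib_right)
  also have "\<dots> \<le> (\<Sum>k\<in>A. ln (y k) + p k * D k)"
    unfolding sum.distrib
    using p_bounds y_pos y_max
    by (intro add_left_mono sum_mono mult_left_mono)
      (auto simp: D_def intro: ln_one_add_diff_ln_antimono)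
  also have "\<dots> \<le> (\<Sum>k\<in>A. ln (p k + y k))"
    using p_bounds y_pos by (intro sum_mono) (auto simp: D_def intro: ln_add_ge_chord)
  finally show ?thesis .
qed

lemma sum_elog:
  assumes "finite A"
  shows "(\<Sum>k\<in>A. elog (x k)) = (if \<forall>k\<in>A. 0 < x k then ereal (\<Sum>k\<in>A. ln (x k)) else -\<infinity>)"
proof (cases "\<forall>k\<in>A. 0 < x k")
  case True
  then show ?thesis
    by (simp add: elog_def)
next
  case False
  then obtain k where k: "k \<in> A" "elog (x k) = -\<infinity>"
    by (auto simp: elog_def)
  have "(\<Sum>i\<in>A - {k}. elog (x i)) \<noteq> \<infinity>"
    by (simp add: sum_Pinfty elog_def)
  then have "(\<Sum>i\<in>A. elog (x i)) = -\<infinity>"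
    using k assms by (simp add: sum.remove)
  then show ?thesis
    using False by simp
qed

theorem proposition1:
  fixes K j :: nat and y t :: "nat \<Rightarrow> real"
  assumes "K \<ge> 2"
    and "y \<in> prob_simplex K"
    and "j \<in> {1..K}"
    and "\<forall>k\<in>{1..K}. y k \<le> y j"
    and "\<forall>k\<in>{1..K}. t k = (if k = j then 1 else 0)"
  shows "\<forall>p \<in> prob_simplex K.
           (\<Sum>k=1..K. elog (t k + y k)) \<le> (\<Sum>k=1..K. elog (p k + y k))"
proof
  fix p assume "p \<in> prob_simplex K"
  then have p_bounds: "\<And>k. k \<in> {1..K} \<Longrightarrow> 0 \<le> p k \<and> p k \<le> 1" "(\<Sum>k=1..K. p k) = 1"
    by (auto simp: prob_simplex_def)
  from assms(2) have y_nonneg: "\<And>k. k \<in> {1..K} \<Longrightarrow> 0 \<le> y k" and "(\<Sum>k=1..K. y k) = 1"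
    by (auto simp: prob_simplex_def)
  then have "0 < y j"
    using assms(4) sum_nonpos[of "{1..K}" y] by fastforce
  show "(\<Sum>k=1..K. elog (t k + y k)) \<le> (\<Sum>k=1..K. elog (p k + y k))"
  proof (cases "\<forall>k\<in>{1..K}. 0 < y k")
    case True
    have "(\<Sum>k=1..K. ln (t k + y k)) = (\<Sum>k=1..K. ln ((if k = j then 1 else 0) + y k))"
      using assms(5) by simp
    also have "\<dots> \<le> (\<Sum>k=1..K. ln (p k + y k))"
      using True assms(3,4) p_bounds by (intro sum_ln_vertex_le) auto
    moreover have "\<forall>k\<in>{1..K}. 0 < t k + y k" "\<forall>k\<in>{1..K}. 0 < p k + y k"
      using True assms(5) p_bounds by (simp_all add: add_nonneg_pos)
    ultimately show ?thesis
      by (simp add: sum_elog)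
  next
    case False
    then obtain k where "k \<in> {1..K}" "y k = 0"
      using y_nonneg by force
    moreover from this \<open>0 < y j\<close> have "k \<noteq> j"
      by auto
    ultimately have "\<not> (\<forall>i\<in>{1..K}. 0 < t i + y i)"
      using assms(5) by auto
    then have "(\<Sum>k=1..K. elog (t k + y k)) = -\<infinity>"
      by (simp only: sum_elog[OF finite_atLeastAtMost] if_False)
    then show ?thesis
      by simp
  qed
qed

end
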